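(* Let $(X,Y)$ be a centred bivariate Gaussian vector with unit variances and correlation $\rho\in[0,1)$. Let $S\subset\mathbb{R}$ be a bounded open set with Lebesgue measure $|S|<\infty$. For $u>0$ define $d(u,S)=\inf_{s\in S}|u+s|=\operatorname{dist}(-u,S)$. Then \[ \mathbb{P}(X-u\in S,\ Y-u\in S)\le\frac{|S|^2}{2\pi\sqrt{1-\rho^2}}\exp\Big(-\frac{d(u,S)^2}{1+\rho}\Big). \] *)

theory Defs
  imports "HOL-Probability.Probability"
begin

definition bvn_density :: "real \<Rightarrow> real \<Rightarrow> real \<Rightarrow> real" where
  "bvn_density \<rho> x y =
     exp (- (x\<^sup>2 - 2 * \<rho> * x * y + y\<^sup>2) / (2 * (1 - \<rho>\<^sup>2))) / (2 * pi * sqrt (1 - \<rho>\<^sup>2))"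

end

theory Submission
  imports Defs
begin

text \<open>On the event, both coordinates of (X, Y) lie in the translate S + u, whose points have
  absolute value at least d = dist(-u, S). Writing the exponent of the bivariate normal density
  as ((1 - rho)(x^2 + y^2) + rho (x - y)^2) / (2 (1 - rho^2)) shows that the density is at most
  exp(-d^2/(1 + rho)) / (2 pi sqrt(1 - rho^2)) on the square (S + u) x (S + u); the probability is
  therefore bounded by this constant times the area |S|^2 of the square.\<close>

lemma bvn_exponent_ge:
  fixes \<rho> x y d :: real
  assumes "0 \<le> \<rho>" "\<rho> < 1" "0 \<le> d" "d \<le> \<bar>x\<bar>" "d \<le> \<bar>y\<bar>"
  shows "d\<^sup>2 / (1 + \<rho>) \<le> (x\<^sup>2 - 2 * \<rho> * x * y + y\<^sup>2) / (2 * (1 - \<rho>\<^sup>2))"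
proof -
  have split: "x\<^sup>2 - 2 * \<rho> * x * y + y\<^sup>2 = (1 - \<rho>) * (x\<^sup>2 + y\<^sup>2) + \<rho> * (x - y)\<^sup>2"
    by (simp add: power2_eq_square algebra_simps)
  have "d\<^sup>2 \<le> x\<^sup>2" "d\<^sup>2 \<le> y\<^sup>2"
    using assms by (metis abs_le_square_iff abs_of_nonneg)+
  then have "(1 - \<rho>) * (2 * d\<^sup>2) \<le> (1 - \<rho>) * (x\<^sup>2 + y\<^sup>2)"
    using assms by (intro mult_left_mono) auto
  moreover have "0 \<le> \<rho> * (x - y)\<^sup>2"
    using assms by simp
  ultimately have "(1 - \<rho>) * (2 * d\<^sup>2) \<le> x\<^sup>2 - 2 * \<rho> * x * y + y\<^sup>2"
    unfolding split by linarith
  moreover have "0 < 2 * (1 - \<rho>\<^sup>2)"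
    using assms(1,2) by (simp add: abs_square_less_1)
  ultimately have "(1 - \<rho>) * (2 * d\<^sup>2) / (2 * (1 - \<rho>\<^sup>2))
      \<le> (x\<^sup>2 - 2 * \<rho> * x * y + y\<^sup>2) / (2 * (1 - \<rho>\<^sup>2))"
    by (intro divide_right_mono) auto
  moreover have "2 * (1 - \<rho>\<^sup>2) = (1 - \<rho>) * (2 * (1 + \<rho>))"
    by (simp add: power2_eq_square algebra_simps)
  then have "(1 - \<rho>) * (2 * d\<^sup>2) / (2 * (1 - \<rho>\<^sup>2)) = d\<^sup>2 / (1 + \<rho>)"
    using assms(1,2) by (simp add: divide_simps)
  ultimately show ?thesis
    by simp
qed

lemma bvn_density_le:
  fixes \<rho> x y d :: real
  assumes "0 \<le> \<rho>" "\<rho> < 1" "0 \<le> d" "d \<le> \<bar>x\<bar>" "d \<le> \<bar>y\<bar>"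
  shows "bvn_density \<rho> x y \<le> exp (- (d\<^sup>2) / (1 + \<rho>)) / (2 * pi * sqrt (1 - \<rho>\<^sup>2))"
proof -
  have "0 < 1 - \<rho>\<^sup>2"
    using assms(1,2) by (simp add: abs_square_less_1)
  moreover have "- (x\<^sup>2 - 2 * \<rho> * x * y + y\<^sup>2) / (2 * (1 - \<rho>\<^sup>2)) \<le> - (d\<^sup>2) / (1 + \<rho>)"
    using bvn_exponent_ge[OF assms] by (simp only: minus_divide_left neg_le_iff_le)
  ultimately show ?thesis
    unfolding bvn_density_def by (intro divide_right_mono) auto
qed

lemma bvn_density_le_on_translate:
  fixes \<rho> u x y :: real and S :: "real set"
  assumes "0 \<le> \<rho>" "\<rho> < 1" "x - u \<in> S" "y - u \<in> S"
  shows "bvn_density \<rho> x y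
    \<le> exp (- ((INF s\<in>S. \<bar>u + s\<bar>)\<^sup>2) / (1 + \<rho>)) / (2 * pi * sqrt (1 - \<rho>\<^sup>2))"
proof (rule bvn_density_le[OF assms(1,2)])
  have bdd: "bdd_below ((\<lambda>s. \<bar>u + s\<bar>) ` S)"
    by (rule bdd_belowI[of _ 0]) auto
  show "0 \<le> (INF s\<in>S. \<bar>u + s\<bar>)"
    using assms(3) by (force intro: cINF_greatest)
  show "(INF s\<in>S. \<bar>u + s\<bar>) \<le> \<bar>x\<bar>" "(INF s\<in>S. \<bar>u + s\<bar>) \<le> \<bar>y\<bar>"
    using cINF_lower[OF bdd assms(3)] cINF_lower[OF bdd assms(4)] by simp_all
qed

lemma distributed_emeasure_le:
  assumes "distributed M N X f" "A \<in> sets N" "\<And>z. z \<in> A \<Longrightarrow> f z \<le> c"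
  shows "emeasure M (X -` A \<inter> space M) \<le> c * emeasure N A"
proof -
  have "emeasure M (X -` A \<inter> space M) = (\<integral>\<^sup>+ z. f z * indicator A z \<partial>N)"
    using assms(1,2) by (rule distributed_emeasure)
  also have "\<dots> \<le> (\<integral>\<^sup>+ z. c * indicator A z \<partial>N)"
    using assms(3) by (intro nn_integral_mono) (auto simp: indicator_def)
  also have "\<dots> = c * emeasure N A"
    using assms(2) by (rule nn_integral_cmult_indicator)
  finally show ?thesis .
qed

lemma emeasure_lborel_translate:
  fixes S :: "'a::euclidean_space set"
  assumes "S \<in> sets borel"
  shows "emeasure lborel ((\<lambda>x. x - a) -` S) = emeasure lborel S"
proof -
  have "emeasure lborel S = emeasure (distr lborel borel ((+) (- a))) S"
    by (simp add: lborel_distr_plus)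
  also have "\<dots> = emeasure lborel ((\<lambda>x. x - a) -` S)"
    using assms by (subst emeasure_distr) (auto simp: vimage_def)
  finally show ?thesis ..
qed

theorem lemma2p4:
  fixes M :: "'a measure" and X Y :: "'a \<Rightarrow> real"
    and \<rho> u :: real and S :: "real set"
  assumes "prob_space M"
    and "distributed M (lborel \<Otimes>\<^sub>M lborel) (\<lambda>\<omega>. (X \<omega>, Y \<omega>))
           (\<lambda>(x, y). ennreal (bvn_density \<rho> x y))"
    and "0 \<le> \<rho>" and "\<rho> < 1"
    and "open S" and "bounded S" and "emeasure lborel S < \<infinity>"
    and "u > 0"
  shows "measure M {\<omega> \<in> space M. X \<omega> - u \<in> S \<and> Y \<omega> - u \<in> S}
         \<le> (measure lborel S)\<^sup>2 / (2 * pi * sqrt (1 - \<rho>\<^sup>2))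
            * exp (- ((INF s\<in>S. \<bar>u + s\<bar>)\<^sup>2) / (1 + \<rho>))"
proof -
  define d where "d = (INF s\<in>S. \<bar>u + s\<bar>)"
  define c where "c = exp (- (d\<^sup>2) / (1 + \<rho>)) / (2 * pi * sqrt (1 - \<rho>\<^sup>2))"
  define T where "T = (\<lambda>x. x - u) -` S"
  have c_nonneg: "0 \<le> c"
    unfolding c_def using assms(3,4) by (simp add: abs_square_less_1 less_imp_le)
  have T_borel: "T \<in> sets borel"
    unfolding T_def using measurable_sets[of "\<lambda>x. x - u" borel borel S] assms(5) by simp
  have density_le: "ennreal (bvn_density \<rho> x y) \<le> ennreal c" if "(x, y) \<in> T \<times> T" for x y
    using that bvn_density_le_on_translate[OF assms(3,4)] unfolding c_def d_def T_def
    by (auto intro: ennreal_leI)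
  have "{\<omega> \<in> space M. X \<omega> - u \<in> S \<and> Y \<omega> - u \<in> S} = (\<lambda>\<omega>. (X \<omega>, Y \<omega>)) -` (T \<times> T) \<inter> space M"
    unfolding T_def by auto
  also have "emeasure M \<dots> \<le> ennreal c * emeasure (lborel \<Otimes>\<^sub>M lborel) (T \<times> T)"
    using T_borel density_le by (intro distributed_emeasure_le[OF assms(2)]) auto
  also have "emeasure (lborel \<Otimes>\<^sub>M lborel) (T \<times> T) = emeasure lborel S * emeasure lborel S"
    using T_borel assms(5) unfolding T_def
    by (simp add: lborel.emeasure_pair_measure_Times emeasure_lborel_translate borel_open)
  also have "emeasure lborel S = ennreal (measure lborel S)"
    using assms(7) by (simp add: emeasure_eq_ennreal_measure)
  finally have "emeasure M {\<omega> \<in> space M. X \<omega> - u \<in> S \<and> Y \<omega> - u \<in> S}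
      \<le> ennreal (c * (measure lborel S)\<^sup>2)"
    using c_nonneg by (simp add: ennreal_mult power2_eq_square)
  then have "measure M {\<omega> \<in> space M. X \<omega> - u \<in> S \<and> Y \<omega> - u \<in> S} \<le> c * (measure lborel S)\<^sup>2"
    using c_nonneg by (simp add: measure_def[of M] enn2real_leI)
  then show ?thesis
    unfolding c_def d_def by (simp add: field_simps)
qed

end
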